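(* Let $\tau>0$, $\zeta\in\mathbb{C}$, $\sigma\in\{1,-1\}$, $q\in\mathbb{C}$, and set $$A=\begin{pmatrix}-i\zeta&0\\0&i\zeta\end{pmatrix},\qquad B=\begin{pmatrix}0&q\\-\sigma\overline{q}&0\end{pmatrix}.$$ Consider the 11-factor product $$P=e^{\frac{7}{48}\tau B}e^{\frac{1}{3}\tau A}e^{\frac{3}{8}\tau B}e^{-\frac{1}{3}\tau A}e^{-\frac{1}{48}\tau B}e^{\tau A}e^{-\frac{1}{48}\tau B}e^{-\frac{1}{3}\tau A}e^{\frac{3}{8}\tau B}e^{\frac{1}{3}\tau A}e^{\frac{7}{48}\tau B}.$$ Let $Z=e^{-i\tau\zeta/3}$ and $W=Z^2$. Then $P=Z^{-7}\,\hat S(W)$, where $\hat S(W)$ is a $2\times 2$ matrix whose entries are polynomials in $W$ of degree at most $7$ with coefficients independent of $\zeta$ (depending only on $\tau,q,\sigma$). Equivalently, $P=Z^{-7}S(Z)$ with $S$ a matrix polynomial in $Z$ of degree at most $14$ containing only even powers of $Z$.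
   Context: $\overline{q}$ denotes the complex conjugate of $q$; $e^{M}$ denotes the matrix exponential. *)

theory Defs
  imports "HOL-Analysis.Analysis"
begin

type_synonym cmat2 = "complex^2^2"

primrec mpow :: "'a::comm_ring_1^'n^'n \<Rightarrow> nat \<Rightarrow> 'a^'n^'n" where
  "mpow M 0 = mat 1"
| "mpow M (Suc k) = M ** mpow M k"

definition mexp :: "complex^'n^'n \<Rightarrow> complex^'n^'n" where
  "mexp M = (\<Sum>k. (1 / fact k) *\<^sub>R mpow M k)"

definition cscale :: "complex \<Rightarrow> complex^'n^'m \<Rightarrow> complex^'n^'m" where
  "cscale c M = (\<chi> i j. c * M $ i $ j)"

definition matA :: "complex \<Rightarrow> cmat2" where
  "matA \<zeta> = (\<chi> i j. if i = 1 \<and> j = 1 then - \<i> * \<zeta>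
                     else if i = 2 \<and> j = 2 then \<i> * \<zeta> else 0)"

definition matB :: "complex \<Rightarrow> real \<Rightarrow> cmat2" where
  "matB q \<sigma> = (\<chi> i j. if i = 1 \<and> j = 2 then q
                     else if i = 2 \<and> j = 1 then - (of_real \<sigma>) * cnj q else 0)"

definition prodP :: "real \<Rightarrow> complex \<Rightarrow> complex \<Rightarrow> real \<Rightarrow> cmat2" where
  "prodP \<tau> \<zeta> q \<sigma> =
     mexp (( 7/48 * \<tau>) *\<^sub>R matB q \<sigma>) **
     mexp (( 1/3  * \<tau>) *\<^sub>R matA \<zeta>) **
     mexp (( 3/8  * \<tau>) *\<^sub>R matB q \<sigma>) **
     mexp ((-1/3  * \<tau>) *\<^sub>R matA \<zeta>) **
     mexp ((-1/48 * \<tau>) *\<^sub>R matB q \<sigma>) **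
     mexp (\<tau> *\<^sub>R matA \<zeta>) **
     mexp ((-1/48 * \<tau>) *\<^sub>R matB q \<sigma>) **
     mexp ((-1/3  * \<tau>) *\<^sub>R matA \<zeta>) **
     mexp (( 3/8  * \<tau>) *\<^sub>R matB q \<sigma>) **
     mexp (( 1/3  * \<tau>) *\<^sub>R matA \<zeta>) **
     mexp (( 7/48 * \<tau>) *\<^sub>R matB q \<sigma>)"

end

theory Submission
  imports Defs "HOL-Computational_Algebra.Polynomial"
begin

text \<open>
  The factors \<open>e^{sB}\<close> do not depend on \<open>\<zeta>\<close>, and every factor \<open>e^{sA}\<close> occurring in \<open>P\<close>
  has \<open>s = k\<tau>/3\<close> with \<open>k \<in> {\<plusminus>1, 3}\<close>, so it is the diagonal matrix \<open>diag(Z^k, Z^{-k})\<close>.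
  Writing \<open>diag(Z^k, Z^{-k}) = Z^{-|k|} diag(W^k, 1)\<close> (or \<open>Z^{-|k|} diag(1, W^{|k|})\<close>), every
  factor has the form \<open>Z^{-n} S(W)\<close> with \<open>S\<close> a matrix polynomial of degree at most \<open>n\<close>;
  this form is closed under products with the exponents adding up, and \<open>1+1+3+1+1 = 7\<close>.
\<close>

definition diagm :: "('n \<Rightarrow> complex) \<Rightarrow> complex^'n^'n" where
  "diagm d = (\<chi> i j. if i = j then d i else 0)"

lemma diagm_mult: "diagm a ** diagm b = diagm (\<lambda>i. a i * b i)"
  by (simp add: diagm_def matrix_matrix_mult_def vec_eq_iff if_distrib[of "\<lambda>x. x * _"] cong: if_cong)

lemma mpow_diagm: "mpow (diagm d) k = diagm (\<lambda>i. d i ^ k)"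
  by (induction k) (simp_all add: diagm_mult, simp add: diagm_def mat_def)

lemma mexp_diagm: "mexp (diagm d) = diagm (\<lambda>i. exp (d i))"
proof -
  have "(\<lambda>k. (1 / fact k) *\<^sub>R mpow (diagm d) k) sums diagm (\<lambda>i. exp (d i))"
    unfolding sums_def
  proof (intro vec_tendstoI)
    fix i j
    show "((\<lambda>n. (\<Sum>k<n. (1 / fact k) *\<^sub>R mpow (diagm d) k) $ i $ j)
            \<longlongrightarrow> diagm (\<lambda>i. exp (d i)) $ i $ j) sequentially"
    proof (cases "i = j")
      case True
      have "(\<lambda>k. d i ^ k /\<^sub>R fact k) sums exp (d i)" by (rule exp_converges)
      then show ?thesis using True
        by (simp only: mpow_diagm) (simp add: diagm_def sums_def divide_inverse_commute)
    next
      case False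
      then show ?thesis by (simp only: mpow_diagm) (simp add: diagm_def)
    qed
  qed
  then show ?thesis unfolding mexp_def by (rule sums_unique[symmetric])
qed

lemma cscale_mult_cscale: "cscale a X ** cscale b Y = cscale (a * b) (X ** Y)"
  by (simp add: cscale_def matrix_matrix_mult_def vec_eq_iff sum_distrib_left algebra_simps)

lemma poly_matrix_mult:
  "(\<chi> i j. poly (P$i$j) w) ** (\<chi> i j. poly (Q$i$j) w) = (\<chi> i j. poly ((P ** Q)$i$j) w)"
  by (simp add: matrix_matrix_mult_def vec_eq_iff poly_sum)

lemma degree_matrix_mult_le:
  fixes P Q :: "'a::comm_semiring_1 poly^'n^'n"
  assumes "\<And>i j. degree (P$i$j) \<le> n" and "\<And>i j. degree (Q$i$j) \<le> m"
  shows "degree ((P ** Q)$i$j) \<le> n + m"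
  unfolding matrix_matrix_mult_def
  by (simp, rule degree_sum_le) (auto intro: order.trans[OF degree_mult_le] add_mono assms)

lemma poly_le_degree_eq_sum:
  fixes p :: "'a::comm_semiring_1 poly"
  assumes "degree p \<le> n"
  shows "poly p x = (\<Sum>i\<le>n. coeff p i * x ^ i)"
proof -
  have "poly p x = (\<Sum>i\<le>degree p. coeff p i * x ^ i)" by (rule poly_altdef)
  also have "\<dots> = (\<Sum>i\<le>n. coeff p i * x ^ i)"
    by (rule sum.mono_neutral_left) (use assms in \<open>auto simp: coeff_eq_0\<close>)
  finally show ?thesis .
qed

text \<open>A matrix Laurent polynomial in \<open>z x\<close> with exponents \<open>-n, -n+2, \<dots>, n\<close>.\<close>
definition laurent_mat :: "('a \<Rightarrow> complex) \<Rightarrow> nat \<Rightarrow> ('a \<Rightarrow> complex^'n^'n) \<Rightarrow> bool" where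
  "laurent_mat z n F \<longleftrightarrow> (\<exists>S::complex poly^'n^'n. (\<forall>i j. degree (S$i$j) \<le> n) \<and>
     (\<forall>x. F x = cscale (inverse (z x ^ n)) (\<chi> i j. poly (S$i$j) (z x ^ 2))))"

lemma laurent_mat_const: "laurent_mat z 0 (\<lambda>_. M)"
  unfolding laurent_mat_def
  by (rule exI[of _ "\<chi> i j. [:M$i$j:]"]) (simp add: cscale_def vec_eq_iff)

lemma laurent_mat_mult:
  assumes "laurent_mat z n F" and "laurent_mat z m G"
  shows "laurent_mat z (n + m) (\<lambda>x. F x ** G x)"
proof -
  obtain P where P_deg: "\<And>i j. degree (P$i$j) \<le> n"
    and F: "\<And>x. F x = cscale (inverse (z x ^ n)) (\<chi> i j. poly (P$i$j) (z x ^ 2))"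
    using assms(1) unfolding laurent_mat_def by blast
  obtain Q where Q_deg: "\<And>i j. degree (Q$i$j) \<le> m"
    and G: "\<And>x. G x = cscale (inverse (z x ^ m)) (\<chi> i j. poly (Q$i$j) (z x ^ 2))"
    using assms(2) unfolding laurent_mat_def by blast
  have "F x ** G x = cscale (inverse (z x ^ (n + m))) (\<chi> i j. poly ((P ** Q)$i$j) (z x ^ 2))" for x
    by (simp add: F G cscale_mult_cscale poly_matrix_mult power_add mult.commute)
  with degree_matrix_mult_le[OF P_deg Q_deg] show ?thesis
    unfolding laurent_mat_def by blast
qed

lemma laurent_mat_diagm_power:
  assumes "\<And>x. z x \<noteq> 0"
  shows "laurent_mat z k (\<lambda>x. diagm (\<lambda>i. if S i then z x ^ k else inverse (z x ^ k)))"
  unfolding laurent_mat_def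
proof (intro exI[of _ "\<chi> i j. if i = j then (if S i then monom 1 k else 1) else 0"] conjI allI)
  fix i j
  show "degree ((\<chi> i j. if i = j then (if S i then monom 1 k else 1) else 0) $ i $ j) \<le> k"
    by (simp add: degree_monom_eq)
next
  fix x
  have "z x ^ k \<noteq> 0" using assms by simp
  then show "diagm (\<lambda>i. if S i then z x ^ k else inverse (z x ^ k)) =
      cscale (inverse (z x ^ k))
        (\<chi> i j. poly ((\<chi> i j. if i = j then (if S i then monom 1 k else 1) else 0) $ i $ j) (z x ^ 2))"
    by (simp add: assms diagm_def cscale_def vec_eq_iff poly_monom power2_eq_square power_mult_distrib field_simps)
qed

lemma mexp_scaleR_matA:
  "mexp (t *\<^sub>R matA \<zeta>) = diagm (\<lambda>i. if i = 1 then exp (- \<i> * of_real t * \<zeta>) else exp (\<i> * of_real t * \<zeta>))"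
proof -
  have "t *\<^sub>R matA \<zeta> = diagm (\<lambda>i. if i = 1 then - \<i> * of_real t * \<zeta> else \<i> * of_real t * \<zeta>)"
    unfolding matA_def diagm_def vec_eq_iff
    by (auto simp: forall_2) (auto simp: scaleR_conv_of_real)
  then show ?thesis by (simp add: mexp_diagm if_distrib)
qed

definition phase :: "real \<Rightarrow> complex \<Rightarrow> complex" where
  "phase \<tau> \<zeta> = exp (- \<i> * of_real \<tau> * \<zeta> / 3)"

lemma exp_matA_entry_phase_power:
  "exp (- \<i> * of_real (real k * \<tau> / 3) * \<zeta>) = phase \<tau> \<zeta> ^ k"
  unfolding phase_def exp_of_nat_mult[symmetric] by (rule arg_cong[where f = exp]) (simp add: field_simps)

lemma laurent_mat_mexp_matA:
  assumes "t = real k * \<tau> / 3 \<or> t = - (real k * \<tau> / 3)"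
  shows "laurent_mat (phase \<tau>) k (\<lambda>\<zeta>. mexp (t *\<^sub>R matA \<zeta>))"
proof -
  have exp_conj: "exp (\<i> * of_real s * \<zeta>) = inverse (exp (- \<i> * of_real s * \<zeta>))" for s \<zeta>
    by (simp add: exp_minus)
  have exp_neg: "exp (- \<i> * of_real (- s) * \<zeta>) = inverse (exp (- \<i> * of_real s * \<zeta>))" for s \<zeta>
    by (simp add: exp_minus)
  have "\<exists>S. \<forall>\<zeta>. mexp (t *\<^sub>R matA \<zeta>) =
          diagm (\<lambda>i. if S i then phase \<tau> \<zeta> ^ k else inverse (phase \<tau> \<zeta> ^ k))"
    using assms
  proof
    assume t: "t = real k * \<tau> / 3"
    show ?thesis
      unfolding mexp_scaleR_matA exp_conj t exp_matA_entry_phase_power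
      by (intro exI[of _ "\<lambda>i. i = 1"]) simp
  next
    assume t: "t = - (real k * \<tau> / 3)"
    show ?thesis
      unfolding mexp_scaleR_matA exp_conj t exp_neg exp_matA_entry_phase_power inverse_inverse_eq
      by (intro exI[of _ "\<lambda>i. i \<noteq> 1"] allI arg_cong[where f = diagm] ext) simp
  qed
  then show ?thesis
    using laurent_mat_diagm_power[of "phase \<tau>"] by (auto simp: phase_def)
qed

lemma laurent_mat_coeffs:
  assumes "laurent_mat z n F"
  shows "\<exists>C. \<forall>x. F x = cscale (inverse (z x ^ n)) (\<Sum>k\<le>n. cscale ((z x ^ 2) ^ k) (C k))"
proof -
  obtain S where S_deg: "\<And>i j. degree (S$i$j) \<le> n"
    and F: "\<And>x. F x = cscale (inverse (z x ^ n)) (\<chi> i j. poly (S$i$j) (z x ^ 2))"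
    using assms unfolding laurent_mat_def by blast
  have "(\<chi> i j. poly (S$i$j) w) = (\<Sum>k\<le>n. cscale (w ^ k) (\<chi> i j. coeff (S$i$j) k))" for w
    by (simp add: vec_eq_iff cscale_def poly_le_degree_eq_sum[OF S_deg] mult.commute)
  then show ?thesis
    by (intro exI[of _ "\<lambda>k. \<chi> i j. coeff (S$i$j) k"]) (simp add: F)
qed

theorem mainTheorem2:
  fixes \<tau> :: real and q :: complex and \<sigma> :: real
  assumes "\<tau> > 0" and "\<sigma> \<in> {1, -1}"
  shows "\<exists>C :: nat \<Rightarrow> cmat2. \<forall>\<zeta> :: complex.
           (let Z = exp (- \<i> * of_real \<tau> * \<zeta> / 3); W = Z ^ 2 in
              prodP \<tau> \<zeta> q \<sigma> = cscale (inverse (Z ^ 7)) (\<Sum>k\<le>7. cscale (W ^ k) (C k)))"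
proof -
  have A_third: "laurent_mat (phase \<tau>) 1 (\<lambda>\<zeta>. mexp ((1/3 * \<tau>) *\<^sub>R matA \<zeta>))"
    by (rule laurent_mat_mexp_matA) simp
  have A_minus_third: "laurent_mat (phase \<tau>) 1 (\<lambda>\<zeta>. mexp ((-1/3 * \<tau>) *\<^sub>R matA \<zeta>))"
    by (rule laurent_mat_mexp_matA) simp
  have A_full: "laurent_mat (phase \<tau>) 3 (\<lambda>\<zeta>. mexp (\<tau> *\<^sub>R matA \<zeta>))"
    by (rule laurent_mat_mexp_matA) simp
  have "laurent_mat (phase \<tau>) (0+1+0+1+0+3+0+1+0+1+0) (\<lambda>\<zeta>. prodP \<tau> \<zeta> q \<sigma>)"
    unfolding prodP_def
    by (intro laurent_mat_mult laurent_mat_const A_third A_minus_third A_full)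
  then obtain C where "\<forall>\<zeta>. prodP \<tau> \<zeta> q \<sigma> =
      cscale (inverse (phase \<tau> \<zeta> ^ 7)) (\<Sum>k\<le>7. cscale ((phase \<tau> \<zeta> ^ 2) ^ k) (C k))"
    using laurent_mat_coeffs by fastforce
  then show ?thesis
    unfolding Let_def phase_def by blast
qed

end
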